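(* Let $\mathcal{S}=\{S_1,\dots,S_N\}\subset\mathbb{R}^Q_{\ge0}$ and suppose $\rho\notin\mathcal{P}$. Let $\eta\in\mathbb{R}^Q_{\ge0}$. There exists a diagonal matrix $\Delta$ with positive diagonal entries such that, under MaxWeight with matrix $\Delta$, $\lim_{t\to\infty}X(t)/t=\eta$, if and only if the following conditions hold: (1) $\eta=(\rho-\sum_m\alpha_mS_m)^+$ for some $\alpha_m\ge0$ with $\sum_m\alpha_m=1$; (2) there exists $v\in\mathbb{R}^Q_{\ge0}$ such that $\alpha_m>0$ implies $\langle v,S_m\rangle\ge\langle v,S_k\rangle$ for all $k$, and moreover $v_q=0$ if and only if $\eta_q=0$.
   Context: Model: $Q$ queues, discrete time. Arrivals $A(t)$ with $0\le A_q(t)\le\bar A_q<\infty$ and $\rho_q=\lim_{t\to\infty}\frac1t\sum_{s=0}^{t-1}A_q(s)\in(0,\infty)$. Departures $D_q(t)=\min\{S_q(t),X_q(t)\}$, $X(t+1)=X(t)+A(t)-D(t)$, $X(0)=0$. MaxWeight with matrix $\Delta$: $S(t)\in\arg\max_{S\in\mathcal{S}}\langle S,\Delta X(t)\rangle$. $(x)^+$ is the componentwise positive part. Stability region $\mathcal{P}=\{r\in\mathbb{R}^Q_{\ge0}: r\le\sum_n\alpha_nS_n\text{ for some }\alpha_n\ge0,\sum_n\alpha_n=1\}$. *)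

theory Defs
  imports "HOL-Analysis.Analysis"
begin

text \<open>Queues are indexed by a finite type 'q (so Q = CARD('q)); vectors are real^'q.
  The schedule set is S 0, ..., S (N-1).\<close>

definition pos_part :: "real^'q \<Rightarrow> real^'q" where
  "pos_part x = (\<chi> q. max 0 (x $ q))"

definition nonneg_vec :: "real^'q \<Rightarrow> bool" where
  "nonneg_vec x \<longleftrightarrow> (\<forall>q. 0 \<le> x $ q)"

definition stab_region :: "(nat \<Rightarrow> real^'q) \<Rightarrow> nat \<Rightarrow> (real^'q) set" where
  "stab_region S N = {r. nonneg_vec r \<and>
     (\<exists>\<alpha>::nat \<Rightarrow> real. (\<forall>n<N. 0 \<le> \<alpha> n) \<and> (\<Sum>n<N. \<alpha> n) = 1 \<and>
        (\<forall>q. r $ q \<le> (\<Sum>n<N. \<alpha> n *\<^sub>R S n) $ q))}"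

definition positive_diagonal :: "real^'q^'q \<Rightarrow> bool" where
  "positive_diagonal D \<longleftrightarrow> (\<forall>i j. i \<noteq> j \<longrightarrow> D $ i $ j = 0) \<and> (\<forall>i. 0 < D $ i $ i)"

text \<open>Ties may be broken arbitrarily.\<close>
definition maxweight_traj ::
  "(nat \<Rightarrow> real^'q) \<Rightarrow> nat \<Rightarrow> real^'q^'q \<Rightarrow> (nat \<Rightarrow> real^'q)
     \<Rightarrow> (nat \<Rightarrow> real^'q) \<Rightarrow> (nat \<Rightarrow> real^'q) \<Rightarrow> bool" where
  "maxweight_traj S N D A Sch X \<longleftrightarrow>
     X 0 = 0 \<and>
     (\<forall>t. (\<exists>n<N. Sch t = S n) \<and> (\<forall>k<N. inner (S k) (D *v X t) \<le> inner (Sch t) (D *v X t))) \<and>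
     (\<forall>t. X (Suc t) = X t + A t - (\<chi> q. min (Sch t $ q) (X t $ q)))"

end

theory Submission
  imports Defs
begin

text \<open>
  Sufficiency is a Lyapunov argument. Put \<open>\<sigma> = \<Sum>\<^sub>m \<alpha>\<^sub>m S\<^sub>m\<close> and choose the diagonal \<open>\<Delta>\<close> with
  \<open>\<Delta> \<eta> = v\<close>. For \<open>V(T) = \<Sum>\<^sub>q \<Delta>\<^sub>q\<^sub>q (X\<^sub>q(T) - T \<eta>\<^sub>q)\<^sup>2\<close> the one-step drift is bounded by a constant plus
  the arrival fluctuation \<open>\<Sum>\<^sub>q \<Delta>\<^sub>q\<^sub>q (X\<^sub>q(t) - t \<eta>\<^sub>q)(A\<^sub>q(t) - \<rho>\<^sub>q)\<close>: MaxWeight prefers the schedule to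
  \<open>\<sigma>\<close>, \<open>\<sigma>\<close> lies in the face of the schedules maximising \<open>\<langle>v,\<cdot>\<rangle>\<close>, and \<open>\<eta> = (\<rho> - \<sigma>)\<^sup>+\<close>.
  Summation by parts makes the accumulated fluctuation \<open>o(T\<^sup>2)\<close>, so \<open>V(T) = o(T\<^sup>2)\<close> and
  \<open>X(T)/T \<rightarrow> \<eta>\<close>.

  Necessity: if \<open>X(t)/t \<rightarrow> \<eta>\<close>, the MaxWeight weights \<open>\<Delta> X(t)\<close> point asymptotically in the
  direction \<open>v = \<Delta> \<eta>\<close>, so eventually only schedules maximising \<open>\<langle>v,\<cdot>\<rangle>\<close> are used. A limit
  point \<open>\<sigma>\<close> of the empirical schedule averages is then a convex combination of that face, and
  each queue grows at rate \<open>(\<rho>\<^sub>q - \<sigma>\<^sub>q)\<^sup>+\<close>, since a linearly growing queue is eventually never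
  starved.
\<close>

lemma sum_abs_over_square_tendsto_zero:
  fixes b :: "nat \<Rightarrow> real"
  assumes "(\<lambda>t. b t / real t) \<longlonglongrightarrow> 0"
  shows "(\<lambda>T. (\<Sum>t\<le>T. \<bar>b t\<bar>) / (real T)\<^sup>2) \<longlonglongrightarrow> 0"
proof (rule order_tendstoI)
  fix r :: real assume "0 < r"
  then obtain T0 where T0: "\<And>t. t \<ge> T0 \<Longrightarrow> \<bar>b t / real t\<bar> < r / 4"
    using LIMSEQ_D[OF assms, of "r / 4"] by auto
  define K where "K = (\<Sum>t\<le>T0. \<bar>b t\<bar>)"
  have "(\<lambda>T. K * (1 / real T)\<^sup>2 + r / 4 * (1 + 1 / real T)) \<longlonglongrightarrow> K * 0\<^sup>2 + r / 4 * (1 + 0)"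
    by (intro tendsto_intros lim_1_over_n)
  then have "\<forall>\<^sub>F T in sequentially. K * (1 / real T)\<^sup>2 + r / 4 * (1 + 1 / real T) < r"
    by (rule order_tendstoD(2)) (use \<open>0 < r\<close> in simp)
  with eventually_ge_at_top[of "max 1 T0"]
  show "\<forall>\<^sub>F T in sequentially. (\<Sum>t\<le>T. \<bar>b t\<bar>) / (real T)\<^sup>2 < r"
  proof eventually_elim
    case (elim T)
    have "\<bar>b t\<bar> \<le> (if t \<le> T0 then \<bar>b t\<bar> else 0) + r / 4 * real T" if "t \<le> T" for t
    proof (cases "t \<le> T0")
      case False
      then have "\<bar>b t\<bar> \<le> r / 4 * real t"
        using T0[of t] \<open>0 < r\<close> by (simp add: abs_divide field_simps)
      also have "\<dots> \<le> r / 4 * real T" using \<open>t \<le> T\<close> \<open>0 < r\<close> by simp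
      finally show ?thesis using False by simp
    qed (use \<open>0 < r\<close> in simp)
    then have "(\<Sum>t\<le>T. \<bar>b t\<bar>) \<le> (\<Sum>t\<le>T. (if t \<le> T0 then \<bar>b t\<bar> else 0) + r / 4 * real T)"
      by (intro sum_mono) simp
    also have "\<dots> = K + r / 4 * real T * (real T + 1)"
    proof -
      have "{..T} \<inter> {t. t \<le> T0} = {..T0}" using elim by auto
      then show ?thesis by (simp add: sum.distrib sum.If_cases K_def algebra_simps)
    qed
    finally have "(\<Sum>t\<le>T. \<bar>b t\<bar>) / (real T)\<^sup>2 \<le> K * (1 / real T)\<^sup>2 + r / 4 * (1 + 1 / real T)"
      using elim by (simp add: divide_right_mono field_simps power2_eq_square)
    then show ?case using elim by linarith
  qed
next
  fix r :: real assume "r < 0"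
  then show "\<forall>\<^sub>F T in sequentially. r < (\<Sum>t\<le>T. \<bar>b t\<bar>) / (real T)\<^sup>2"
    by (intro always_eventually allI) (simp add: sum_nonneg less_le_trans[of r 0])
qed

lemma summation_by_parts:
  fixes e c :: "nat \<Rightarrow> 'a::comm_ring"
  shows "(\<Sum>t<T. e t * c t) = e T * (\<Sum>t<T. c t) - (\<Sum>t<T. (e (Suc t) - e t) * (\<Sum>s<Suc t. c s))"
  by (induction T) (simp_all add: algebra_simps)

lemma sum_mult_bounded_increments_over_square_tendsto_zero:
  fixes e c :: "nat \<Rightarrow> real"
  assumes e0: "e 0 = 0" and increments: "\<And>t. \<bar>e (Suc t) - e t\<bar> \<le> M"
    and mean: "(\<lambda>T. (\<Sum>t<T. c t) / real T) \<longlonglongrightarrow> 0"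
  shows "(\<lambda>T. (\<Sum>t<T. e t * c t) / (real T)\<^sup>2) \<longlonglongrightarrow> 0"
proof (rule Lim_null_comparison)
  define B where "B T = (\<Sum>t<T. c t)" for T
  have e_bound: "\<bar>e T\<bar> \<le> M * real T" for T
  proof (induction T)
    case (Suc T)
    then show ?case using increments[of T] by (simp add: algebra_simps)
  qed (simp add: e0)
  have M: "0 \<le> M" using increments[of 0] by linarith
  show "(\<lambda>T. M * \<bar>B T / real T\<bar> + M * ((\<Sum>t\<le>T. \<bar>B t\<bar>) / (real T)\<^sup>2)) \<longlonglongrightarrow> 0"
    using tendsto_add[OF tendsto_mult_right_zero[OF tendsto_rabs_zero[OF mean]]
        tendsto_mult_right_zero[OF sum_abs_over_square_tendsto_zero[OF mean]]]
    unfolding B_def by simp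
  show "\<forall>\<^sub>F T in sequentially. norm ((\<Sum>t<T. e t * c t) / (real T)\<^sup>2)
          \<le> M * \<bar>B T / real T\<bar> + M * ((\<Sum>t\<le>T. \<bar>B t\<bar>) / (real T)\<^sup>2)"
  proof (intro always_eventually allI)
    fix T
    have "\<bar>\<Sum>t<T. (e (Suc t) - e t) * B (Suc t)\<bar> \<le> (\<Sum>t<T. M * \<bar>B (Suc t)\<bar>)"
      by (rule order_trans[OF sum_abs sum_mono])
        (simp add: abs_mult mult_right_mono increments)
    also have "\<dots> = M * (\<Sum>t<T. \<bar>B (Suc t)\<bar>)" by (simp add: sum_distrib_left)
    also have "\<dots> \<le> M * (\<Sum>t\<le>T. \<bar>B t\<bar>)"
      using M by (intro mult_left_mono) (simp_all add: sum.atMost_shift[of _ T])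
    finally have parts: "\<bar>\<Sum>t<T. (e (Suc t) - e t) * B (Suc t)\<bar> \<le> M * (\<Sum>t\<le>T. \<bar>B t\<bar>)" .
    have "\<bar>\<Sum>t<T. e t * c t\<bar> = \<bar>e T * B T - (\<Sum>t<T. (e (Suc t) - e t) * B (Suc t))\<bar>"
      unfolding B_def by (rule arg_cong[where f = abs], rule summation_by_parts)
    also have "\<dots> \<le> \<bar>e T\<bar> * \<bar>B T\<bar> + \<bar>\<Sum>t<T. (e (Suc t) - e t) * B (Suc t)\<bar>"
      using abs_triangle_ineq4[of "e T * B T"] by (simp add: abs_mult)
    also have "\<dots> \<le> M * real T * \<bar>B T\<bar> + M * (\<Sum>t\<le>T. \<bar>B t\<bar>)"
      using parts e_bound[of T] by (intro add_mono mult_right_mono) auto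
    finally have "\<bar>\<Sum>t<T. e t * c t\<bar> \<le> M * real T * \<bar>B T\<bar> + M * (\<Sum>t\<le>T. \<bar>B t\<bar>)" .
    then have "\<bar>\<Sum>t<T. e t * c t\<bar> / (real T)\<^sup>2 \<le> (M * real T * \<bar>B T\<bar> + M * (\<Sum>t\<le>T. \<bar>B t\<bar>)) / (real T)\<^sup>2"
      by (rule divide_right_mono) simp
    also have "\<dots> = M * \<bar>B T / real T\<bar> + M * ((\<Sum>t\<le>T. \<bar>B t\<bar>) / (real T)\<^sup>2)"
      by (simp add: abs_divide power2_eq_square add_divide_distrib)
    finally show "norm ((\<Sum>t<T. e t * c t) / (real T)\<^sup>2)
          \<le> M * \<bar>B T / real T\<bar> + M * ((\<Sum>t\<le>T. \<bar>B t\<bar>) / (real T)\<^sup>2)"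
      by (simp add: abs_divide)
  qed
qed

lemma maxweight_drift:
  fixes x s a d v \<eta> \<rho> \<sigma> :: "'q::finite \<Rightarrow> real" and t :: real
  assumes x_nonneg: "\<And>q. 0 \<le> x q" and s_nonneg: "\<And>q. 0 \<le> s q" and d_nonneg: "\<And>q. 0 \<le> d q"
    and v_eq: "\<And>q. v q = d q * \<eta> q" and v_nonneg: "\<And>q. 0 \<le> v q"
    and \<eta>_eq: "\<And>q. \<eta> q = max 0 (\<rho> q - \<sigma> q)" and "0 \<le> t"
    and maxweight: "(\<Sum>q\<in>UNIV. d q * x q * \<sigma> q) \<le> (\<Sum>q\<in>UNIV. d q * x q * s q)"
    and face: "(\<Sum>q\<in>UNIV. v q * s q) \<le> (\<Sum>q\<in>UNIV. v q * \<sigma> q)"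
  shows "(\<Sum>q\<in>UNIV. d q * (x q - t * \<eta> q) * (a q - min (s q) (x q) - \<eta> q))
    \<le> (\<Sum>q\<in>UNIV. d q * (x q - t * \<eta> q) * (a q - \<rho> q)) + (\<Sum>q\<in>UNIV. d q * (s q)\<^sup>2)"
proof -
  define e where "e q = x q - t * \<eta> q" for q
  define served where "served q = min (s q) (x q)" for q
  \<comment> \<open>The last three terms are controlled by \<open>\<eta> = (\<rho> - \<sigma>)\<^sup>+\<close>, by MaxWeight, and by the face condition.\<close>
  have "(\<Sum>q\<in>UNIV. d q * e q * (a q - served q - \<eta> q))
      = (\<Sum>q\<in>UNIV. d q * e q * (a q - \<rho> q) + d q * e q * (\<rho> q - \<eta> q - \<sigma> q)
          + d q * x q * (\<sigma> q - served q) - t * (v q * (\<sigma> q - served q)))"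
    by (rule sum.cong) (simp_all add: e_def v_eq algebra_simps)
  also have "\<dots> = (\<Sum>q\<in>UNIV. d q * e q * (a q - \<rho> q)) + (\<Sum>q\<in>UNIV. d q * e q * (\<rho> q - \<eta> q - \<sigma> q))
        + (\<Sum>q\<in>UNIV. d q * x q * (\<sigma> q - served q)) - t * (\<Sum>q\<in>UNIV. v q * (\<sigma> q - served q))"
    by (simp only: sum.distrib sum_subtractf sum_distrib_left)
  moreover have "(\<Sum>q\<in>UNIV. d q * e q * (\<rho> q - \<eta> q - \<sigma> q)) \<le> 0"
  proof (rule sum_nonpos)
    fix q
    show "d q * e q * (\<rho> q - \<eta> q - \<sigma> q) \<le> 0"
    proof (cases "\<eta> q = 0")
      case True
      then show ?thesis using \<eta>_eq[of q] x_nonneg[of q] d_nonneg[of q]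
        by (simp add: e_def mult_nonneg_nonpos)
    qed (use \<eta>_eq[of q] in simp)
  qed
  moreover have "(\<Sum>q\<in>UNIV. d q * x q * (\<sigma> q - served q)) \<le> (\<Sum>q\<in>UNIV. d q * (s q)\<^sup>2)"
  proof -
    have "x q * (s q - served q) \<le> (s q)\<^sup>2" for q
      using x_nonneg[of q] s_nonneg[of q]
      by (cases "x q \<le> s q") (auto simp: served_def power2_eq_square intro: mult_mono)
    then have "(\<Sum>q\<in>UNIV. d q * x q * (s q - served q)) \<le> (\<Sum>q\<in>UNIV. d q * (s q)\<^sup>2)"
      by (intro sum_mono) (simp add: mult.assoc mult_left_mono d_nonneg)
    then show ?thesis using maxweight by (simp add: right_diff_distrib sum_subtractf)
  qed
  moreover have face_gap: "0 \<le> (\<Sum>q\<in>UNIV. v q * (\<sigma> q - served q))"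
  proof -
    have "(\<Sum>q\<in>UNIV. v q * (\<sigma> q - s q)) \<le> (\<Sum>q\<in>UNIV. v q * (\<sigma> q - served q))"
      by (intro sum_mono mult_left_mono) (simp_all add: served_def v_nonneg)
    then show ?thesis using face by (simp add: right_diff_distrib sum_subtractf)
  qed
  moreover have "0 \<le> t * (\<Sum>q\<in>UNIV. v q * (\<sigma> q - served q))"
    using \<open>0 \<le> t\<close> face_gap by simp
  ultimately show ?thesis by (fold e_def served_def) linarith
qed

lemma drift_over_square_tendsto_zero:
  fixes V :: "nat \<Rightarrow> real" and e c :: "nat \<Rightarrow> 'q::finite \<Rightarrow> real" and d M :: "'q \<Rightarrow> real"
  assumes V0: "V 0 = 0" and V_nonneg: "\<And>T. 0 \<le> V T"
    and drift: "\<And>t. V (Suc t) \<le> V t + (\<Sum>q\<in>UNIV. d q * (e t q * c t q)) + C"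
    and e0: "\<And>q. e 0 q = 0" and increments: "\<And>t q. \<bar>e (Suc t) q - e t q\<bar> \<le> M q"
    and mean: "\<And>q. (\<lambda>T. (\<Sum>t<T. c t q) / real T) \<longlonglongrightarrow> 0"
  shows "(\<lambda>T. V T / (real T)\<^sup>2) \<longlonglongrightarrow> 0"
proof -
  define G where "G T q = (\<Sum>t<T. e t q * c t q)" for T q
  have V_bound: "V T \<le> (\<Sum>q\<in>UNIV. d q * G T q) + C * real T" for T
  proof (induction T)
    case (Suc T)
    have "(\<Sum>q\<in>UNIV. d q * G (Suc T) q) = (\<Sum>q\<in>UNIV. d q * G T q) + (\<Sum>q\<in>UNIV. d q * (e T q * c T q))"
      by (simp add: G_def sum.distrib distrib_left)
    then show ?case using Suc drift[of T] by (simp add: algebra_simps)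
  qed (simp add: V0 G_def)
  have "(\<lambda>T. G T q / (real T)\<^sup>2) \<longlonglongrightarrow> 0" for q
    unfolding G_def using e0 increments mean by (rule sum_mult_bounded_increments_over_square_tendsto_zero)
  then have "(\<lambda>T. (\<Sum>q\<in>UNIV. d q * (G T q / (real T)\<^sup>2)) + C * (1 / real T)) \<longlonglongrightarrow> (\<Sum>q\<in>UNIV. d q * 0) + C * 0"
    by (intro tendsto_intros lim_1_over_n)
  then have "(\<lambda>T. (\<Sum>q\<in>UNIV. d q * (G T q / (real T)\<^sup>2)) + C * (1 / real T)) \<longlonglongrightarrow> 0"
    by simp
  then show ?thesis
  proof (rule Lim_null_comparison[rotated], intro always_eventually allI)
    fix T
    have "V T / (real T)\<^sup>2 \<le> ((\<Sum>q\<in>UNIV. d q * G T q) + C * real T) / (real T)\<^sup>2"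
      by (rule divide_right_mono[OF V_bound]) simp
    also have "\<dots> = (\<Sum>q\<in>UNIV. d q * (G T q / (real T)\<^sup>2)) + C * (1 / real T)"
      by (simp add: add_divide_distrib sum_divide_distrib power2_eq_square times_divide_eq_right[symmetric]
          del: times_divide_eq_right)
    finally show "norm (V T / (real T)\<^sup>2) \<le> (\<Sum>q\<in>UNIV. d q * (G T q / (real T)\<^sup>2)) + C * (1 / real T)"
      using V_nonneg[of T] by simp
  qed
qed

lemma weighted_sum_squares_over_square_tendsto_zero_imp:
  fixes e :: "nat \<Rightarrow> 'q::finite \<Rightarrow> real" and d :: "'q \<Rightarrow> real"
  assumes d_pos: "\<And>q. 0 < d q"
    and "(\<lambda>T. (\<Sum>q\<in>UNIV. d q * (e T q)\<^sup>2) / (real T)\<^sup>2) \<longlonglongrightarrow> 0"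
  shows "(\<lambda>T. e T q / real T) \<longlonglongrightarrow> 0"
proof -
  define V where "V T = (\<Sum>q\<in>UNIV. d q * (e T q)\<^sup>2)" for T
  have "(\<lambda>T. sqrt (V T / (real T)\<^sup>2 / d q)) \<longlonglongrightarrow> sqrt (0 / d q)"
    using assms(2) less_imp_neq[OF d_pos[of q]] unfolding V_def by (intro tendsto_intros) auto
  then have "(\<lambda>T. sqrt (V T / (real T)\<^sup>2 / d q)) \<longlonglongrightarrow> 0"
    by simp
  then show ?thesis
  proof (rule Lim_null_comparison[rotated], intro always_eventually allI)
    fix T
    have "d q * (e T q)\<^sup>2 \<le> V T"
      unfolding V_def using d_pos by (intro member_le_sum) (auto simp: less_imp_le)
    then have "(e T q)\<^sup>2 \<le> V T / d q"
      using d_pos[of q] by (simp add: field_simps)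
    then have "(e T q)\<^sup>2 / (real T)\<^sup>2 \<le> V T / d q / (real T)\<^sup>2"
      by (rule divide_right_mono) simp
    then have "(e T q / real T)\<^sup>2 \<le> V T / (real T)\<^sup>2 / d q"
      by (simp add: power_divide divide_divide_eq_left mult.commute)
    then show "norm (e T q / real T) \<le> sqrt (V T / (real T)\<^sup>2 / d q)"
      using real_sqrt_le_mono by fastforce
  qed
qed

lemma maxweight_queue_growth_rate:
  fixes x a s :: "nat \<Rightarrow> 'q::finite \<Rightarrow> real" and d v \<eta> \<rho> \<sigma> smax abar :: "'q \<Rightarrow> real"
  assumes x0: "\<And>q. x 0 q = 0"
    and step: "\<And>t q. x (Suc t) q = x t q + a t q - min (s t q) (x t q)"
    and s_bounds: "\<And>t q. 0 \<le> s t q \<and> s t q \<le> smax q"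
    and a_bounds: "\<And>t q. 0 \<le> a t q \<and> a t q \<le> abar q"
    and d_pos: "\<And>q. 0 < d q" and v_eq: "\<And>q. v q = d q * \<eta> q" and v_nonneg: "\<And>q. 0 \<le> v q"
    and \<eta>_eq: "\<And>q. \<eta> q = max 0 (\<rho> q - \<sigma> q)"
    and maxweight: "\<And>t. (\<Sum>q\<in>UNIV. d q * x t q * \<sigma> q) \<le> (\<Sum>q\<in>UNIV. d q * x t q * s t q)"
    and face: "\<And>t. (\<Sum>q\<in>UNIV. v q * s t q) \<le> (\<Sum>q\<in>UNIV. v q * \<sigma> q)"
    and arrival_rate: "\<And>q. (\<lambda>T. (\<Sum>t<T. a t q) / real T) \<longlonglongrightarrow> \<rho> q"
  shows "(\<lambda>T. x T q / real T) \<longlonglongrightarrow> \<eta> q"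
proof -
  have x_nonneg: "0 \<le> x t q" for t q
  proof (induction t)
    case (Suc t)
    then show ?case using step[of t q] a_bounds[of t q] by linarith
  qed (simp add: x0)
  define e where "e t q = x t q - real t * \<eta> q" for t q
  define V where "V T = (\<Sum>q\<in>UNIV. d q * (e T q)\<^sup>2)" for T
  define M where "M q = abar q + smax q + \<eta> q" for q
  define C where "C = (\<Sum>q\<in>UNIV. d q * (2 * (smax q)\<^sup>2 + (M q)\<^sup>2))"
  have e_increment: "e (Suc t) q - e t q = a t q - min (s t q) (x t q) - \<eta> q" for t q
    by (simp add: e_def step algebra_simps)
  have increment_bound: "\<bar>e (Suc t) q - e t q\<bar> \<le> M q" for t q
    using s_bounds[of t q] a_bounds[of t q] x_nonneg[of t q] \<eta>_eq[of q]
    unfolding e_increment M_def by (auto simp: abs_le_iff min_def max_def)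
  have V_step: "V (Suc t) \<le> V t + (\<Sum>q\<in>UNIV. 2 * d q * (e t q * (a t q - \<rho> q))) + C" for t
  proof -
    have "V (Suc t) = (\<Sum>q\<in>UNIV. d q * (e t q)\<^sup>2 + 2 * (d q * e t q * (e (Suc t) q - e t q))
        + d q * (e (Suc t) q - e t q)\<^sup>2)"
      unfolding V_def by (rule sum.cong) (simp_all add: power2_eq_square algebra_simps)
    also have "\<dots> = V t + 2 * (\<Sum>q\<in>UNIV. d q * e t q * (e (Suc t) q - e t q))
        + (\<Sum>q\<in>UNIV. d q * (e (Suc t) q - e t q)\<^sup>2)"
      unfolding V_def by (simp only: sum.distrib sum_distrib_left)
    also have "(\<Sum>q\<in>UNIV. d q * e t q * (e (Suc t) q - e t q))
        \<le> (\<Sum>q\<in>UNIV. d q * e t q * (a t q - \<rho> q)) + (\<Sum>q\<in>UNIV. d q * (s t q)\<^sup>2)"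
      unfolding e_increment unfolding e_def
      by (rule maxweight_drift) (use x_nonneg s_bounds d_pos v_eq v_nonneg \<eta>_eq maxweight face
          in \<open>auto simp: less_imp_le\<close>)
    also have "(\<Sum>q\<in>UNIV. d q * (e (Suc t) q - e t q)\<^sup>2) \<le> (\<Sum>q\<in>UNIV. d q * (M q)\<^sup>2)"
      using d_pos by (intro sum_mono mult_left_mono)
        (auto simp: less_imp_le intro: order_trans[OF _ power_mono[OF increment_bound abs_ge_zero]])
    also have "(\<Sum>q\<in>UNIV. d q * (s t q)\<^sup>2) \<le> (\<Sum>q\<in>UNIV. d q * (smax q)\<^sup>2)"
      using s_bounds d_pos by (intro sum_mono mult_left_mono power_mono) (auto simp: less_imp_le)
    finally show ?thesis
      by (simp add: C_def sum.distrib sum_distrib_left algebra_simps)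
  qed
  have arrival_excess: "(\<lambda>T. (\<Sum>t<T. a t q - \<rho> q) / real T) \<longlonglongrightarrow> 0" for q
  proof -
    have "(\<lambda>T. (\<Sum>t<T. a t q) / real T - \<rho> q) \<longlonglongrightarrow> \<rho> q - \<rho> q"
      by (intro tendsto_intros arrival_rate)
    moreover have "\<forall>\<^sub>F T in sequentially. (\<Sum>t<T. a t q) / real T - \<rho> q = (\<Sum>t<T. a t q - \<rho> q) / real T"
      using eventually_gt_at_top[of 0] by eventually_elim (simp add: sum_subtractf field_simps)
    ultimately show ?thesis by (simp add: Lim_transform_eventually)
  qed
  have "(\<lambda>T. V T / (real T)\<^sup>2) \<longlonglongrightarrow> 0"
    using V_step increment_bound arrival_excess d_pos
    by (intro drift_over_square_tendsto_zero[where e = e and c = "\<lambda>t q. a t q - \<rho> q" and M = M])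
      (auto simp: V_def e_def x0 sum_nonneg less_imp_le)
  then have "(\<lambda>T. e T q / real T + \<eta> q) \<longlonglongrightarrow> 0 + \<eta> q"
    unfolding V_def by (intro tendsto_intros weighted_sum_squares_over_square_tendsto_zero_imp[OF d_pos])
  moreover have "\<forall>\<^sub>F T in sequentially. e T q / real T + \<eta> q = x T q / real T"
    using eventually_gt_at_top[of 0] by eventually_elim (simp add: e_def field_simps)
  ultimately show ?thesis by (simp add: Lim_transform_eventually)
qed

lemma positive_diagonal_mult:
  assumes "positive_diagonal D"
  shows "(D *v x) $ i = D $ i $ i * x $ i"
proof -
  have "(\<Sum>j\<in>UNIV. D $ i $ j * x $ j) = (\<Sum>j\<in>UNIV. if j = i then D $ i $ i * x $ j else 0)"
    using assms unfolding positive_diagonal_def by (intro sum.cong) auto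
  then show ?thesis by (simp add: matrix_vector_mult_def)
qed

lemma positive_diagonal_maps_onto:
  fixes \<eta> v :: "real^'q"
  assumes "nonneg_vec \<eta>" and "nonneg_vec v" and "\<forall>q. v $ q = 0 \<longleftrightarrow> \<eta> $ q = 0"
  obtains D where "positive_diagonal D" and "D *v \<eta> = v"
proof
  define d where "d q = (if \<eta> $ q = 0 then 1 else v $ q / \<eta> $ q)" for q
  define D :: "real^'q^'q" where "D = (\<chi> i j. if i = j then d i else 0)"
  have "0 < d q" for q
    using assms by (cases "\<eta> $ q = 0") (auto simp: d_def nonneg_vec_def order_le_less, metis divide_pos_pos)
  then show D: "positive_diagonal D"
    by (simp add: positive_diagonal_def D_def)
  show "D *v \<eta> = v"
    using assms(3) unfolding vec_eq_iff positive_diagonal_mult[OF D] by (simp add: D_def d_def)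
qed

lemma inner_convex_combination_le:
  fixes S :: "nat \<Rightarrow> 'a::real_inner"
  assumes "\<forall>m<N. 0 \<le> \<alpha> m" and "(\<Sum>m<N. \<alpha> m) = 1" and "\<And>m. m < N \<Longrightarrow> inner (S m) w \<le> c"
  shows "inner (\<Sum>m<N. \<alpha> m *\<^sub>R S m) w \<le> c"
proof -
  have "inner (\<Sum>m<N. \<alpha> m *\<^sub>R S m) w = (\<Sum>m<N. \<alpha> m * inner (S m) w)"
    by (simp add: inner_sum_left)
  also have "\<dots> \<le> (\<Sum>m<N. \<alpha> m * c)"
    using assms by (intro sum_mono mult_left_mono) auto
  finally show ?thesis using assms(2) by (simp flip: sum_distrib_right)
qed

lemma inner_convex_combination_ge:
  fixes S :: "nat \<Rightarrow> 'a::real_inner"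
  assumes "\<forall>m<N. 0 \<le> \<alpha> m" and "(\<Sum>m<N. \<alpha> m) = 1"
    and "\<And>m. m < N \<Longrightarrow> 0 < \<alpha> m \<Longrightarrow> c \<le> inner w (S m)"
  shows "c \<le> inner w (\<Sum>m<N. \<alpha> m *\<^sub>R S m)"
proof -
  have "(\<Sum>m<N. \<alpha> m * c) \<le> (\<Sum>m<N. \<alpha> m * inner w (S m))"
    using assms by (intro sum_mono) (force intro: mult_left_mono simp: order_le_less)
  also have "\<dots> = inner w (\<Sum>m<N. \<alpha> m *\<^sub>R S m)"
    by (simp add: inner_sum_right)
  finally show ?thesis using assms(2) by (simp flip: sum_distrib_right)
qed

lemma maxweight_rate_sufficient:
  fixes S :: "nat \<Rightarrow> real^'q" and A :: "nat \<Rightarrow> real^'q" and Abar \<rho> \<eta> v :: "real^'q"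
  assumes S_nonneg: "\<forall>n<N. nonneg_vec (S n)"
    and A_bounds: "\<forall>t q. 0 \<le> A t $ q \<and> A t $ q \<le> Abar $ q"
    and rho_lim: "(\<lambda>t. (1 / real t) *\<^sub>R (\<Sum>s<t. A s)) \<longlonglongrightarrow> \<rho>"
    and \<alpha>_nonneg: "\<forall>m<N. 0 \<le> \<alpha> m" and \<alpha>_sum: "(\<Sum>m<N. \<alpha> m) = 1"
    and eta_eq: "\<eta> = pos_part (\<rho> - (\<Sum>m<N. \<alpha> m *\<^sub>R S m))"
    and v_nonneg: "nonneg_vec v"
    and v_face: "\<forall>m<N. 0 < \<alpha> m \<longrightarrow> (\<forall>k<N. inner v (S k) \<le> inner v (S m))"
    and v_zero: "\<forall>q. v $ q = 0 \<longleftrightarrow> \<eta> $ q = 0"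
  shows "\<exists>D. positive_diagonal D \<and>
           (\<forall>Sch X. maxweight_traj S N D A Sch X \<longrightarrow> (\<lambda>t. (1 / real t) *\<^sub>R X t) \<longlonglongrightarrow> \<eta>)"
proof -
  define \<sigma> where "\<sigma> = (\<Sum>m<N. \<alpha> m *\<^sub>R S m)"
  have "nonneg_vec \<eta>"
    using eta_eq by (simp add: nonneg_vec_def pos_part_def)
  then obtain D where D: "positive_diagonal D" and "D *v \<eta> = v"
    using v_nonneg v_zero by (rule positive_diagonal_maps_onto)
  define d where "d q = D $ q $ q" for q
  have d_pos: "0 < d q" for q
    using D by (simp add: positive_diagonal_def d_def)
  have D_mult: "(D *v x) $ q = d q * x $ q" for x q
    unfolding d_def by (rule positive_diagonal_mult[OF D])
  have v_eq: "v $ q = d q * \<eta> $ q" for q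
    using D_mult[of \<eta> q] \<open>D *v \<eta> = v\<close> by simp
  define smax where "smax q = Max ((\<lambda>n. S n $ q) ` {..<N})" for q
  have S_le_smax: "n < N \<Longrightarrow> S n $ q \<le> smax q" for n q
    unfolding smax_def by (rule Max_ge) auto
  have "(\<lambda>t. (1 / real t) *\<^sub>R X t) \<longlonglongrightarrow> \<eta>" if traj: "maxweight_traj S N D A Sch X" for Sch X
  proof (rule vec_tendstoI)
    fix q
    have X0: "X 0 = 0"
      and schedule: "\<And>t. \<exists>n<N. Sch t = S n"
      and maxweight: "\<And>t k. k < N \<Longrightarrow> inner (S k) (D *v X t) \<le> inner (Sch t) (D *v X t)"
      and step: "\<And>t. X (Suc t) = X t + A t - (\<chi> q. min (Sch t $ q) (X t $ q))"
      using traj unfolding maxweight_traj_def by blast+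
    have "(\<lambda>T. X T $ q / real T) \<longlonglongrightarrow> \<eta> $ q"
    proof (rule maxweight_queue_growth_rate[where x = "\<lambda>t q. X t $ q" and a = "\<lambda>t q. A t $ q"
          and s = "\<lambda>t q. Sch t $ q" and d = d and v = "\<lambda>q. v $ q" and \<eta> = "\<lambda>q. \<eta> $ q"
          and \<rho> = "\<lambda>q. \<rho> $ q" and \<sigma> = "\<lambda>q. \<sigma> $ q" and smax = smax and abar = "\<lambda>q. Abar $ q"])
      show "0 \<le> Sch t $ q \<and> Sch t $ q \<le> smax q" for t q
        using schedule[of t] S_nonneg S_le_smax unfolding nonneg_vec_def by metis
      show "(\<Sum>q\<in>UNIV. d q * X t $ q * \<sigma> $ q) \<le> (\<Sum>q\<in>UNIV. d q * X t $ q * Sch t $ q)" for t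
      proof -
        have "inner \<sigma> (D *v X t) \<le> inner (Sch t) (D *v X t)"
          unfolding \<sigma>_def by (rule inner_convex_combination_le[OF \<alpha>_nonneg \<alpha>_sum maxweight])
        then show ?thesis by (simp add: inner_vec_def D_mult algebra_simps)
      qed
      show "(\<Sum>q\<in>UNIV. v $ q * Sch t $ q) \<le> (\<Sum>q\<in>UNIV. v $ q * \<sigma> $ q)" for t
      proof -
        obtain n where "n < N" "Sch t = S n" using schedule[of t] by blast
        then have "inner v (Sch t) \<le> inner v \<sigma>"
          unfolding \<sigma>_def using v_face by (intro inner_convex_combination_ge[OF \<alpha>_nonneg \<alpha>_sum]) auto
        then show ?thesis by (simp add: inner_vec_def)
      qed
      show "(\<lambda>T. (\<Sum>t<T. A t $ q) / real T) \<longlonglongrightarrow> \<rho> $ q" for q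
        using tendsto_vec_nth[OF rho_lim, of q] by simp
    qed (use X0 step A_bounds d_pos v_eq v_nonneg eta_eq in
        \<open>auto simp: nonneg_vec_def pos_part_def \<sigma>_def\<close>)
    then show "(\<lambda>T. ((1 / real T) *\<^sub>R X T) $ q) \<longlonglongrightarrow> \<eta> $ q" by simp
  qed
  with D show ?thesis by blast
qed

lemma convex_hull_image_weights:
  fixes S :: "'b \<Rightarrow> 'a::real_vector"
  assumes "finite I" and "y \<in> convex hull (S ` I)"
  obtains \<alpha> where "\<forall>i. 0 \<le> \<alpha> i" "\<forall>i. i \<notin> I \<longrightarrow> \<alpha> i = 0" "sum \<alpha> I = 1" "(\<Sum>i\<in>I. \<alpha> i *\<^sub>R S i) = y"
proof -
  define W where "W = {y. \<exists>\<alpha>. (\<forall>i. 0 \<le> \<alpha> i) \<and> (\<forall>i. i \<notin> I \<longrightarrow> \<alpha> i = 0) \<and> sum \<alpha> I = 1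
                            \<and> (\<Sum>i\<in>I. \<alpha> i *\<^sub>R S i) = y}"
  have "S ` I \<subseteq> W"
  proof
    fix z assume "z \<in> S ` I"
    then obtain j where "j \<in> I" "z = S j" by blast
    have "(\<Sum>i\<in>I. (if i = j then 1 else 0) *\<^sub>R S i) = (\<Sum>i\<in>I. if i = j then S j else 0)"
      by (rule sum.cong) auto
    with \<open>j \<in> I\<close> \<open>z = S j\<close> show "z \<in> W"
      using \<open>finite I\<close> unfolding W_def by (intro CollectI exI[of _ "\<lambda>i. if i = j then 1 else 0"]) auto
  qed
  moreover have "convex W"
  proof (rule convexI)
    fix y z and u w :: real
    assume "y \<in> W" "z \<in> W" "0 \<le> u" "0 \<le> w" "u + w = 1"
    then obtain \<alpha> \<beta> where
      "\<forall>i. 0 \<le> \<alpha> i" "\<forall>i. i \<notin> I \<longrightarrow> \<alpha> i = 0" "sum \<alpha> I = 1" "(\<Sum>i\<in>I. \<alpha> i *\<^sub>R S i) = y"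
      "\<forall>i. 0 \<le> \<beta> i" "\<forall>i. i \<notin> I \<longrightarrow> \<beta> i = 0" "sum \<beta> I = 1" "(\<Sum>i\<in>I. \<beta> i *\<^sub>R S i) = z"
      unfolding W_def by blast
    with \<open>0 \<le> u\<close> \<open>0 \<le> w\<close> \<open>u + w = 1\<close> show "u *\<^sub>R y + w *\<^sub>R z \<in> W"
      unfolding W_def
      by (intro CollectI exI[of _ "\<lambda>i. u * \<alpha> i + w * \<beta> i"])
        (auto simp: sum.distrib scaleR_add_left scaleR_sum_right simp flip: sum_distrib_left)
  qed
  ultimately have "convex hull (S ` I) \<subseteq> W" by (rule hull_minimal)
  with assms(2) show ?thesis using that unfolding W_def by blast
qed

lemma cesaro_mean_subseq_converges:
  fixes u :: "nat \<Rightarrow> 'a::real_normed_vector"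
  assumes "compact K" and "convex K" and "\<forall>\<^sub>F t in sequentially. u t \<in> K"
  obtains \<sigma> R where "\<sigma> \<in> K" "strict_mono R" "(\<lambda>j. (1 / real (R j)) *\<^sub>R (\<Sum>t<R j. u t)) \<longlonglongrightarrow> \<sigma>"
proof -
  obtain T1 where T1: "\<And>t. T1 \<le> t \<Longrightarrow> u t \<in> K"
    using assms(3) by (auto simp: eventually_sequentially)
  define u' where "u' t = (if T1 \<le> t then u t else u T1)" for t
  define c where "c = (\<Sum>t<T1. u t - u' t)"
  have u'_in: "u' t \<in> K" for t
    using T1 by (simp add: u'_def)
  have sum_u: "(\<Sum>t<T. u t) = (\<Sum>t<T. u' t) + c" if "T1 \<le> T" for T
  proof -
    have "(\<Sum>t<T. u t - u' t) = c"
      unfolding c_def using that by (intro sum.mono_neutral_right) (auto simp: u'_def)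
    then show ?thesis by (simp add: sum_subtractf algebra_simps)
  qed
  define mean where "mean n = (\<Sum>t<Suc n. (1 / real (Suc n)) *\<^sub>R u' t)" for n
  have "mean n \<in> K" for n
    unfolding mean_def using u'_in by (intro convex_sum[OF _ \<open>convex K\<close>]) auto
  then obtain \<sigma> r where "\<sigma> \<in> K" "strict_mono r" and mean_lim: "(mean \<circ> r) \<longlonglongrightarrow> \<sigma>"
    using compact_imp_seq_compact[OF \<open>compact K\<close>] by (metis seq_compactE)
  define R where "R j = Suc (r j)" for j
  have "strict_mono R"
    using \<open>strict_mono r\<close> by (simp add: R_def strict_mono_def)
  have "(\<lambda>j. mean (r j) + (1 / real (R j)) *\<^sub>R c) \<longlonglongrightarrow> \<sigma> + 0 *\<^sub>R c"
    using mean_lim LIMSEQ_subseq_LIMSEQ[OF lim_1_over_n \<open>strict_mono R\<close>]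
    by (intro tendsto_intros) (simp_all add: o_def)
  moreover have "\<forall>\<^sub>F j in sequentially. mean (r j) + (1 / real (R j)) *\<^sub>R c
      = (1 / real (R j)) *\<^sub>R (\<Sum>t<R j. u t)"
    using eventually_ge_at_top[of T1]
  proof eventually_elim
    case (elim j)
    then have "T1 \<le> R j" using seq_suble[OF \<open>strict_mono R\<close>, of j] by linarith
    then have "(\<Sum>t<R j. u t) = (\<Sum>t<R j. u' t) + c" by (rule sum_u)
    then show ?case
      by (simp add: mean_def R_def scaleR_add_right del: sum.lessThan_Suc flip: scaleR_sum_right)
  qed
  ultimately have "(\<lambda>j. (1 / real (R j)) *\<^sub>R (\<Sum>t<R j. u t)) \<longlonglongrightarrow> \<sigma>"
    by (simp add: Lim_transform_eventually)
  with \<open>\<sigma> \<in> K\<close> \<open>strict_mono R\<close> show ?thesis by (rule that)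
qed

lemma queue_growth_rate_eq:
  fixes x a s :: "nat \<Rightarrow> real" and R :: "nat \<Rightarrow> nat"
  assumes dynamics: "\<And>t. x (Suc t) = x t + a t - min (s t) (x t)"
    and x_nonneg: "\<And>t. 0 \<le> x t" and s_le: "\<And>t. s t \<le> smax"
    and "strict_mono R"
    and x_rate: "(\<lambda>t. x t / real t) \<longlonglongrightarrow> \<eta>"
    and a_rate: "(\<lambda>j. (\<Sum>t<R j. a t) / real (R j)) \<longlonglongrightarrow> \<rho>"
    and s_rate: "(\<lambda>j. (\<Sum>t<R j. s t) / real (R j)) \<longlonglongrightarrow> \<sigma>"
  shows "\<eta> = max 0 (\<rho> - \<sigma>)"
proof -
  have x_rate_R: "(\<lambda>j. x (R j) / real (R j)) \<longlonglongrightarrow> \<eta>"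
    using LIMSEQ_subseq_LIMSEQ[OF x_rate \<open>strict_mono R\<close>] by (simp add: o_def)
  have inv_R: "(\<lambda>j. 1 / real (R j)) \<longlonglongrightarrow> 0"
    using LIMSEQ_subseq_LIMSEQ[OF lim_1_over_n \<open>strict_mono R\<close>] by (simp add: o_def)
  have "0 \<le> \<eta>"
    using x_rate x_nonneg by (intro LIMSEQ_le_const) auto
  have lower: "(\<Sum>t<T. a t - s t) \<le> x T" for T
  proof (induction T)
    case (Suc T)
    then show ?case using dynamics[of T] by (simp add: min_def)
  qed (simp add: x_nonneg)
  have "\<rho> - \<sigma> \<le> \<eta>"
  proof (rule tendsto_le[OF _ x_rate_R])
    show "(\<lambda>j. (\<Sum>t<R j. a t) / real (R j) - (\<Sum>t<R j. s t) / real (R j)) \<longlonglongrightarrow> \<rho> - \<sigma>"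
      by (intro tendsto_intros a_rate s_rate)
    show "\<forall>\<^sub>F j in sequentially.
        (\<Sum>t<R j. a t) / real (R j) - (\<Sum>t<R j. s t) / real (R j) \<le> x (R j) / real (R j)"
      using lower by (intro always_eventually allI)
        (simp add: divide_right_mono flip: diff_divide_distrib sum_subtractf)
  qed simp
  moreover have "\<eta> \<le> \<rho> - \<sigma>" if "0 < \<eta>"
  proof -
    have "filterlim (\<lambda>t. x t / real t * real t) at_top sequentially"
      using x_rate \<open>0 < \<eta>\<close> filterlim_real_sequentially by (rule filterlim_tendsto_pos_mult_at_top)
    then have "\<forall>\<^sub>F t in sequentially. smax \<le> x t / real t * real t \<and> 0 < t"
      by (intro eventually_conj eventually_gt_at_top) (simp add: filterlim_at_top)
    then have "\<forall>\<^sub>F t in sequentially. smax \<le> x t"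
      by eventually_elim (simp split: if_splits)
    then obtain T0 where T0: "\<And>t. T0 \<le> t \<Longrightarrow> smax \<le> x t"
      by (auto simp: eventually_sequentially)
    \<comment> \<open>From \<open>T0\<close> on the queue always holds at least the scheduled service, so it is exactly served.\<close>
    define c where "c = x T0 - (\<Sum>t<T0. a t - s t)"
    have exact: "x T = (\<Sum>t<T. a t - s t) + c" if "T0 \<le> T" for T
      using that
    proof (induction T rule: dec_induct)
      case (step T)
      then show ?case using T0[of T] s_le[of T] dynamics[of T] by (simp add: min_def)
    qed (simp add: c_def)
    have "(\<lambda>j. (\<Sum>t<R j. a t) / real (R j) - (\<Sum>t<R j. s t) / real (R j) + c * (1 / real (R j)))
        \<longlonglongrightarrow> \<rho> - \<sigma> + c * 0"
      by (intro tendsto_intros a_rate s_rate inv_R)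
    moreover have "\<forall>\<^sub>F j in sequentially.
        (\<Sum>t<R j. a t) / real (R j) - (\<Sum>t<R j. s t) / real (R j) + c * (1 / real (R j))
          = x (R j) / real (R j)"
      using eventually_ge_at_top[of T0]
    proof eventually_elim
      case (elim j)
      then show ?case
        using exact[of "R j"] seq_suble[OF \<open>strict_mono R\<close>, of j]
        by (simp add: sum_subtractf add_divide_distrib diff_divide_distrib)
    qed
    ultimately have "(\<lambda>j. x (R j) / real (R j)) \<longlonglongrightarrow> \<rho> - \<sigma>"
      by (simp add: Lim_transform_eventually)
    with x_rate_R have "\<eta> = \<rho> - \<sigma>" by (rule LIMSEQ_unique)
    then show ?thesis by simp
  qed
  ultimately show ?thesis using \<open>0 \<le> \<eta>\<close> by (cases "\<eta> = 0") auto
qed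

lemma maxweight_traj_exists:
  assumes "0 < N"
  shows "\<exists>Sch X. maxweight_traj S N D A Sch X"
proof -
  have "\<exists>n<N. \<forall>k<N. inner (S k) w \<le> inner (S n) w" for w
  proof -
    define f where "f k = inner (S k) w" for k
    have "Max (f ` {..<N}) \<in> f ` {..<N}"
      using assms by (intro Max_in) auto
    then obtain n where "n < N" "f n = Max (f ` {..<N})" by auto
    moreover have "f k \<le> Max (f ` {..<N})" if "k < N" for k
      using that by (intro Max_ge) auto
    ultimately show ?thesis unfolding f_def by auto
  qed
  then obtain best where best: "\<And>w. best w < N \<and> (\<forall>k<N. inner (S k) w \<le> inner (S (best w)) w)"
    by metis
  define X where "X = rec_nat 0 (\<lambda>t x. x + A t - (\<chi> q. min (S (best (D *v x)) $ q) (x $ q)))"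
  define Sch where "Sch t = S (best (D *v X t))" for t
  have "maxweight_traj S N D A Sch X"
    unfolding maxweight_traj_def X_def Sch_def using best by auto
  then show ?thesis by blast
qed

lemma maxweight_eventually_optimal:
  fixes S :: "nat \<Rightarrow> real^'q" and D :: "real^'q^'q"
  assumes traj: "maxweight_traj S N D A Sch X"
    and rate: "(\<lambda>t. (1 / real t) *\<^sub>R X t) \<longlonglongrightarrow> \<eta>"
  shows "\<forall>\<^sub>F t in sequentially.
           \<exists>m<N. Sch t = S m \<and> (\<forall>k<N. inner (D *v \<eta>) (S k) \<le> inner (D *v \<eta>) (S m))"
proof -
  define v where "v = D *v \<eta>"
  have schedule: "\<And>t. \<exists>n<N. Sch t = S n"
    and maxweight: "\<And>t k. k < N \<Longrightarrow> inner (S k) (D *v X t) \<le> inner (Sch t) (D *v X t)"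
    using traj unfolding maxweight_traj_def by blast+
  have weights: "(\<lambda>t. D *v ((1 / real t) *\<^sub>R X t)) \<longlonglongrightarrow> v"
    unfolding v_def using matrix_vector_mul_bounded_linear rate by (rule bounded_linear.tendsto)
  have "\<forall>\<^sub>F t in sequentially. \<forall>k\<in>{..<N}.
      (\<forall>j<N. inner v (S j) \<le> inner v (S k)) \<or> inner (S k) (D *v X t) < inner (Sch t) (D *v X t)"
  proof (rule eventually_ball_finite, simp, intro ballI)
    fix k assume "k \<in> {..<N}"
    show "\<forall>\<^sub>F t in sequentially.
        (\<forall>j<N. inner v (S j) \<le> inner v (S k)) \<or> inner (S k) (D *v X t) < inner (Sch t) (D *v X t)"
    proof (cases "\<forall>j<N. inner v (S j) \<le> inner v (S k)")
      case False
      then obtain m where "m < N" "0 < inner (S m - S k) v"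
        by (auto simp: not_le inner_diff_left inner_diff_right inner_commute)
      moreover have "(\<lambda>t. inner (S m - S k) (D *v ((1 / real t) *\<^sub>R X t))) \<longlonglongrightarrow> inner (S m - S k) v"
        by (intro tendsto_intros weights)
      ultimately have "\<forall>\<^sub>F t in sequentially. 0 < inner (S m - S k) (D *v ((1 / real t) *\<^sub>R X t))"
        by (simp add: order_tendstoD(1))
      then show ?thesis
      proof eventually_elim
        case (elim t)
        then have "inner (S k) (D *v X t) < inner (S m) (D *v X t)"
          by (simp add: matrix_vector_mult_scaleR inner_diff_left zero_less_divide_iff)
        also have "\<dots> \<le> inner (Sch t) (D *v X t)" using maxweight \<open>m < N\<close> .
        finally show ?case by simp
      qed
    qed simp
  qed
  then show ?thesis
  proof eventually_elim
    case (elim t)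
    obtain n where "n < N" "Sch t = S n" using schedule[of t] by blast
    with elim show ?case unfolding v_def by auto
  qed
qed

lemma maxweight_rate_eq_pos_part:
  fixes S :: "nat \<Rightarrow> real^'q" and A :: "nat \<Rightarrow> real^'q" and \<rho> \<eta> \<sigma> :: "real^'q"
  assumes A_nonneg: "\<forall>t q. 0 \<le> A t $ q"
    and rho_lim: "(\<lambda>t. (1 / real t) *\<^sub>R (\<Sum>s<t. A s)) \<longlonglongrightarrow> \<rho>"
    and traj: "maxweight_traj S N D A Sch X"
    and rate: "(\<lambda>t. (1 / real t) *\<^sub>R X t) \<longlonglongrightarrow> \<eta>"
    and "strict_mono R"
    and schedule_rate: "(\<lambda>j. (1 / real (R j)) *\<^sub>R (\<Sum>t<R j. Sch t)) \<longlonglongrightarrow> \<sigma>"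
  shows "\<eta> = pos_part (\<rho> - \<sigma>)"
proof -
  have X0: "X 0 = 0" and schedule: "\<And>t. \<exists>n<N. Sch t = S n"
    and step: "\<And>t. X (Suc t) = X t + A t - (\<chi> q. min (Sch t $ q) (X t $ q))"
    using traj unfolding maxweight_traj_def by blast+
  have X_nonneg: "0 \<le> X t $ q" for t q
  proof (induction t)
    case (Suc t)
    then show ?case using step[of t] A_nonneg[rule_format, of t q] by (simp add: min_def)
  qed (simp add: X0)
  have "\<eta> $ q = max 0 (\<rho> $ q - \<sigma> $ q)" for q
  proof (rule queue_growth_rate_eq[where x = "\<lambda>t. X t $ q" and a = "\<lambda>t. A t $ q"
        and s = "\<lambda>t. Sch t $ q" and smax = "Max ((\<lambda>n. S n $ q) ` {..<N})", OF _ _ _ \<open>strict_mono R\<close>])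
    show "X (Suc t) $ q = X t $ q + A t $ q - min (Sch t $ q) (X t $ q)" for t
      using step[of t] by simp
    show "Sch t $ q \<le> Max ((\<lambda>n. S n $ q) ` {..<N})" for t
      using schedule[of t] by (auto intro: Max_ge)
    show "(\<lambda>t. X t $ q / real t) \<longlonglongrightarrow> \<eta> $ q"
      using tendsto_vec_nth[OF rate, of q] by simp
    show "(\<lambda>j. (\<Sum>t<R j. A t $ q) / real (R j)) \<longlonglongrightarrow> \<rho> $ q"
      using LIMSEQ_subseq_LIMSEQ[OF tendsto_vec_nth[OF rho_lim] \<open>strict_mono R\<close>, of q]
      by (simp add: o_def)
    show "(\<lambda>j. (\<Sum>t<R j. Sch t $ q) / real (R j)) \<longlonglongrightarrow> \<sigma> $ q"
      using tendsto_vec_nth[OF schedule_rate, of q] by simp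
  qed (rule X_nonneg)
  then show ?thesis by (simp add: vec_eq_iff pos_part_def)
qed

lemma maxweight_rate_necessary:
  fixes S :: "nat \<Rightarrow> real^'q" and A :: "nat \<Rightarrow> real^'q" and \<rho> \<eta> :: "real^'q"
  assumes A_nonneg: "\<forall>t q. 0 \<le> A t $ q"
    and rho_lim: "(\<lambda>t. (1 / real t) *\<^sub>R (\<Sum>s<t. A s)) \<longlonglongrightarrow> \<rho>"
    and D: "positive_diagonal D"
    and traj: "maxweight_traj S N D A Sch X"
    and rate: "(\<lambda>t. (1 / real t) *\<^sub>R X t) \<longlonglongrightarrow> \<eta>"
  shows "\<exists>\<alpha>::nat \<Rightarrow> real. (\<forall>m<N. 0 \<le> \<alpha> m) \<and> (\<Sum>m<N. \<alpha> m) = 1 \<and>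
           \<eta> = pos_part (\<rho> - (\<Sum>m<N. \<alpha> m *\<^sub>R S m)) \<and>
           (\<exists>v. nonneg_vec v \<and>
              (\<forall>m<N. 0 < \<alpha> m \<longrightarrow> (\<forall>k<N. inner v (S k) \<le> inner v (S m))) \<and>
              (\<forall>q. v $ q = 0 \<longleftrightarrow> \<eta> $ q = 0))"
proof -
  define v where "v = D *v \<eta>"
  define F where "F = {m. m < N \<and> (\<forall>k<N. inner v (S k) \<le> inner v (S m))}"
  have "finite F" "F \<subseteq> {..<N}" by (auto simp: F_def)
  have eventually_face: "\<forall>\<^sub>F t in sequentially. Sch t \<in> convex hull (S ` F)"
    using maxweight_eventually_optimal[OF traj rate]
    by eventually_elim (auto simp: F_def v_def intro: hull_inc)
  have "compact (convex hull (S ` F))"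
    using \<open>finite F\<close> by (simp add: finite_imp_compact_convex_hull)
  then obtain \<sigma> R where "\<sigma> \<in> convex hull (S ` F)" and "strict_mono R"
    and schedule_rate: "(\<lambda>j. (1 / real (R j)) *\<^sub>R (\<Sum>t<R j. Sch t)) \<longlonglongrightarrow> \<sigma>"
    by (rule cesaro_mean_subseq_converges[OF _ convex_convex_hull eventually_face])
  have \<eta>_eq: "\<eta> = pos_part (\<rho> - \<sigma>)"
    by (rule maxweight_rate_eq_pos_part[OF A_nonneg rho_lim traj rate \<open>strict_mono R\<close> schedule_rate])
  obtain \<alpha> where \<alpha>_nonneg: "\<forall>m. 0 \<le> \<alpha> m" and \<alpha>_supp: "\<forall>m. m \<notin> F \<longrightarrow> \<alpha> m = 0"
    and \<alpha>_sum: "sum \<alpha> F = 1" and \<alpha>_\<sigma>: "(\<Sum>m\<in>F. \<alpha> m *\<^sub>R S m) = \<sigma>"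
    using convex_hull_image_weights[OF \<open>finite F\<close> \<open>\<sigma> \<in> convex hull (S ` F)\<close>] by blast
  have "(\<Sum>m<N. \<alpha> m) = sum \<alpha> F" and "(\<Sum>m<N. \<alpha> m *\<^sub>R S m) = (\<Sum>m\<in>F. \<alpha> m *\<^sub>R S m)"
    using \<open>F \<subseteq> {..<N}\<close> \<alpha>_supp by (auto intro: sum.mono_neutral_right)
  then have "(\<Sum>m<N. \<alpha> m) = 1" and "(\<Sum>m<N. \<alpha> m *\<^sub>R S m) = \<sigma>"
    using \<alpha>_sum \<alpha>_\<sigma> by simp_all
  have v_eq: "v $ q = D $ q $ q * \<eta> $ q" for q
    unfolding v_def by (rule positive_diagonal_mult[OF D])
  have D_pos: "0 < D $ q $ q" for q
    using D by (simp add: positive_diagonal_def)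
  show ?thesis
  proof (intro exI[of _ \<alpha>] conjI exI[of _ v])
    show "nonneg_vec v"
      using v_eq D_pos \<eta>_eq by (simp add: nonneg_vec_def pos_part_def less_imp_le)
    show "\<forall>m<N. 0 < \<alpha> m \<longrightarrow> (\<forall>k<N. inner v (S k) \<le> inner v (S m))"
      using \<alpha>_supp by (auto simp: F_def)
    show "\<forall>q. v $ q = 0 \<longleftrightarrow> \<eta> $ q = 0"
      using v_eq D_pos by (simp add: less_imp_neq[symmetric])
  qed (use \<alpha>_nonneg \<eta>_eq \<open>(\<Sum>m<N. \<alpha> m) = 1\<close> \<open>(\<Sum>m<N. \<alpha> m *\<^sub>R S m) = \<sigma>\<close> in simp_all)
qed

theorem proposition3:
  fixes S :: "nat \<Rightarrow> real^'q" and N :: nat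
    and A :: "nat \<Rightarrow> real^'q" and Abar \<rho> \<eta> :: "real^'q"
  assumes N_pos: "0 < N"
    and S_nonneg: "\<forall>n<N. nonneg_vec (S n)"
    and A_bounds: "\<forall>t q. 0 \<le> A t $ q \<and> A t $ q \<le> Abar $ q"
    and rho_lim: "(\<lambda>t. (1 / real t) *\<^sub>R (\<Sum>s<t. A s)) \<longlonglongrightarrow> \<rho>"
    and "\<forall>q. 0 < \<rho> $ q"
    and "\<rho> \<notin> stab_region S N"
    and "nonneg_vec \<eta>"
  shows "(\<exists>D. positive_diagonal D \<and>
            (\<forall>Sch X. maxweight_traj S N D A Sch X \<longrightarrow>
               (\<lambda>t. (1 / real t) *\<^sub>R X t) \<longlonglongrightarrow> \<eta>))
    \<longleftrightarrow>
         (\<exists>\<alpha>::nat \<Rightarrow> real. (\<forall>m<N. 0 \<le> \<alpha> m) \<and> (\<Sum>m<N. \<alpha> m) = 1 \<and>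
            \<eta> = pos_part (\<rho> - (\<Sum>m<N. \<alpha> m *\<^sub>R S m)) \<and>
            (\<exists>v. nonneg_vec v \<and>
               (\<forall>m<N. 0 < \<alpha> m \<longrightarrow> (\<forall>k<N. inner v (S k) \<le> inner v (S m))) \<and>
               (\<forall>q. v $ q = 0 \<longleftrightarrow> \<eta> $ q = 0)))"
  \<comment> \<open>The characterisation holds for every \<open>\<rho>\<close>.\<close>
proof (intro iffI; elim exE conjE)
  fix D assume D: "positive_diagonal D"
    and rate: "\<forall>Sch X. maxweight_traj S N D A Sch X \<longrightarrow> (\<lambda>t. (1 / real t) *\<^sub>R X t) \<longlonglongrightarrow> \<eta>"
  obtain Sch X where traj: "maxweight_traj S N D A Sch X"
    using maxweight_traj_exists[OF N_pos] by blast
  have A_nonneg: "\<forall>t q. 0 \<le> A t $ q"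
    using A_bounds by blast
  from rate traj show "\<exists>\<alpha>. (\<forall>m<N. 0 \<le> \<alpha> m) \<and> (\<Sum>m<N. \<alpha> m) = 1 \<and>
      \<eta> = pos_part (\<rho> - (\<Sum>m<N. \<alpha> m *\<^sub>R S m)) \<and>
      (\<exists>v. nonneg_vec v \<and> (\<forall>m<N. 0 < \<alpha> m \<longrightarrow> (\<forall>k<N. inner v (S k) \<le> inner v (S m))) \<and>
        (\<forall>q. v $ q = 0 \<longleftrightarrow> \<eta> $ q = 0))"
    by (intro maxweight_rate_necessary[OF A_nonneg rho_lim D traj]) blast
next
  fix \<alpha> v
  assume "\<forall>m<N. 0 \<le> \<alpha> m" "(\<Sum>m<N. \<alpha> m) = 1" "\<eta> = pos_part (\<rho> - (\<Sum>m<N. \<alpha> m *\<^sub>R S m))"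
    "nonneg_vec v" "\<forall>m<N. 0 < \<alpha> m \<longrightarrow> (\<forall>k<N. inner v (S k) \<le> inner v (S m))"
    "\<forall>q. v $ q = 0 \<longleftrightarrow> \<eta> $ q = 0"
  then show "\<exists>D. positive_diagonal D \<and>
      (\<forall>Sch X. maxweight_traj S N D A Sch X \<longrightarrow> (\<lambda>t. (1 / real t) *\<^sub>R X t) \<longlonglongrightarrow> \<eta>)"
    by (rule maxweight_rate_sufficient[OF S_nonneg A_bounds rho_lim])
qed

end
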